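(* Fix $\gamma>1$, $\zeta_0>1$, $S_0>0$, $J>0$, $E_0<0$ with $(u_0,E_0)\in\mathcal T_{\rm acc}$, and let $(\bar u_1,\bar E)$ and $l_{\max}$ be as in the context. Define on $[0,l_{\max})$ $$\bar a_{11}:=1-\frac{\bar u_1^{\gamma+1}}{u_s^{\gamma+1}},\qquad \bar a:=\frac{\bar u_1^{\gamma-1}\big(\bar E-(\gamma+1)\bar u_1'\bar u_1\big)}{\gamma S_0J^{\gamma-1}},$$ regarded as functions of $\mathbf x=(x_1,x_2)$ depending only on $x_1$. Then for each $L\in(0,l_{\max})$ there exists a constant $\lambda_L>0$ such that, with $\Omega_L=(0,L)\times(-1,1)$: (a) $-\partial_1\bar a_{11}\ge\lambda_L$ in $\overline{\Omega_L}$; (b) $-\bar a\ge\lambda_L$ in $\overline{\Omega_L}$; (c) $-2\bar a-(2m-1)\partial_1\bar a_{11}\ge\lambda_L$ in $\overline{\Omega_L}$ for $m=0,1,2,3$; (d) setting $\mathfrak a_1(L):=\min_{\overline{\Omega_L}}(-\partial_1\bar a_{11})$, $\mathfrak a_2(L):=\min_{\overline{\Omega_L}}(-\bar a)$, $\mathfrak c_m(L):=\min_{\overline{\Omega_L}}(-2\bar a-(2m-1)\partial_1\bar a_{11})$ for $m=0,1,2,3$, one has $\lim_{L\to l_{\max}-}\mathfrak a_1(L)=\lim_{L\to l_{\max}-}\mathfrak a_2(L)=\lim_{L\to l_{\max}-}\mathfrak c_m(L)=0$ for $m=0,1,2,3$.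
   Context: Given $\gamma>1$, $J>0$, $S_0>0$, $\zeta_0>1$: $u_s:=(\gamma S_0J^{\gamma-1})^{1/(\gamma+1)}$, $\bar u_i:=\zeta_0u_s$, $\bar\rho_i:=J/\bar u_i$, $H(u):=\int_{u_s}^{u}\frac{J}{\bar u_i t^{\gamma+1}}(t^{\gamma+1}-u_s^{\gamma+1})(\bar u_i-t)\,dt$, $\mathcal T_{\rm acc}:=\{(u,E):u>0,\ \tfrac12E^2=H(u),\ (u-u_s)E\ge0\}$ (for $E_0<0$, $0<u_0<u_s$). $(\bar u_1,\bar E)$ is the solution of $\bar u_1'=\bar E\bar u_1^\gamma/(\bar u_1^{\gamma+1}-u_s^{\gamma+1})$, $\bar E'=J/\bar u_1-\bar\rho_i$, $(\bar u_1,\bar E)(0)=(u_0,E_0)$; it is smooth with $\bar u_1'>0$ on its maximal interval $[0,l_{\max})$, $l_{\max}<\infty$, and $\lim_{x_1\to l_{\max}-}\bar u_1'(x_1)=0$. ($\bar a_{11}$ and $\bar a$ are the coefficients of the linearization of the potential flow equation at the background state, normalized by the coefficient of $\partial_{22}$.) *)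

theory Defs
  imports "HOL-Analysis.Analysis"
begin

definition u_s :: "real \<Rightarrow> real \<Rightarrow> real \<Rightarrow> real" where
  "u_s \<gamma> S0 J = (\<gamma> * S0 * J powr (\<gamma> - 1)) powr (1 / (\<gamma> + 1))"

definition ubar_i :: "real \<Rightarrow> real \<Rightarrow> real \<Rightarrow> real \<Rightarrow> real" where
  "ubar_i \<gamma> S0 J \<zeta>0 = \<zeta>0 * u_s \<gamma> S0 J"

definition rhobar_i :: "real \<Rightarrow> real \<Rightarrow> real \<Rightarrow> real \<Rightarrow> real" where
  "rhobar_i \<gamma> S0 J \<zeta>0 = J / ubar_i \<gamma> S0 J \<zeta>0"

definition H :: "real \<Rightarrow> real \<Rightarrow> real \<Rightarrow> real \<Rightarrow> real \<Rightarrow> real" where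
  "H \<gamma> S0 J \<zeta>0 u =
     (LBINT t = u_s \<gamma> S0 J..u.
        J / (ubar_i \<gamma> S0 J \<zeta>0 * t powr (\<gamma> + 1))
        * (t powr (\<gamma> + 1) - u_s \<gamma> S0 J powr (\<gamma> + 1)) * (ubar_i \<gamma> S0 J \<zeta>0 - t))"

definition T_acc :: "real \<Rightarrow> real \<Rightarrow> real \<Rightarrow> real \<Rightarrow> (real \<times> real) set" where
  "T_acc \<gamma> S0 J \<zeta>0 = {(u, E). u > 0 \<and> E\<^sup>2 / 2 = H \<gamma> S0 J \<zeta>0 u
                              \<and> (u - u_s \<gamma> S0 J) * E \<ge> 0}"

text \<open>A C^1 solution on [0,l) of the ODE system for (u,E), with derivatives du, dE,
  the u-equation written in the form (u^(g+1) - u_s^(g+1)) u' = E u^g (which is the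
  stated equation wherever u /= u_s, and makes sense through the sonic point),
  with the initial data and u' > 0.\<close>
definition acc_sol ::
  "real \<Rightarrow> real \<Rightarrow> real \<Rightarrow> real \<Rightarrow> real \<Rightarrow> real \<Rightarrow>
   (real \<Rightarrow> real) \<Rightarrow> (real \<Rightarrow> real) \<Rightarrow> (real \<Rightarrow> real) \<Rightarrow> (real \<Rightarrow> real) \<Rightarrow> real \<Rightarrow> bool" where
  "acc_sol \<gamma> S0 J \<zeta>0 u0 E0 u E du dE l \<longleftrightarrow>
     0 < l \<and> u 0 = u0 \<and> E 0 = E0 \<and>
     continuous_on {0..<l} du \<and> continuous_on {0..<l} dE \<and>
     (\<forall>x\<in>{0..<l}.
        u x > 0 \<and> du x > 0 \<and>
        (u has_real_derivative du x) (at x within {0..<l}) \<and>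
        (E has_real_derivative dE x) (at x within {0..<l}) \<and>
        (u x powr (\<gamma> + 1) - u_s \<gamma> S0 J powr (\<gamma> + 1)) * du x = E x * u x powr \<gamma> \<and>
        dE x = J / u x - rhobar_i \<gamma> S0 J \<zeta>0)"

definition Omega :: "real \<Rightarrow> (real \<times> real) set" where
  "Omega L = {0<..<L} \<times> {-1<..<1}"

end

theory Submission
  imports Defs
begin

(* Along the solution both coefficients are the speed u' times a positive function of u.
   With K = u_s^(gamma+1) = gamma S0 J^(gamma-1) and q = u^gamma / K, differentiating a11 gives
   -d1 a11 = (gamma+1) q u', and eliminating E by the ODE (u^(gamma+1) - K) u' = E u^gamma gives
   -abar = (gamma q + 1/u) u'; hence -2 abar - (2m-1) d1 a11 = ((gamma-1) q + 2/u + 2m(gamma+1) q) u'.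
   Since u' is continuous, positive and tends to 0 at lmax, it is bounded, so u stays in a compact
   interval [u0, M] of (0, oo) on which these weights are continuous and positive. Each coefficient
   is thus continuous and positive on [0, L], hence has a positive minimum there, and it tends to 0
   at lmax, which squeezes its minimum over [0, L] to 0. *)

lemma compact_continuous_pos_imp_uniformly_pos:
  fixes g :: "'a::topological_space \<Rightarrow> real"
  assumes "compact S" "continuous_on S g" "\<And>x. x \<in> S \<Longrightarrow> 0 < g x"
  shows "\<exists>lam>0. \<forall>x\<in>S. lam \<le> g x"
proof (cases "S = {}")
  case True
  then show ?thesis by (auto intro: exI[of _ 1])
next
  case False
  then obtain x0 where "x0 \<in> S" "\<forall>y\<in>S. g x0 \<le> g y"
    using continuous_attains_inf[OF assms(1) _ assms(2)] by blast
  then show ?thesis using assms(3) by blast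
qed

lemma Inf_image_Icc_tendsto_0:
  fixes g :: "real \<Rightarrow> real"
  assumes "a < b" "\<And>x. x \<in> {a..<b} \<Longrightarrow> 0 \<le> g x" "(g \<longlongrightarrow> 0) (at_left b)"
  shows "((\<lambda>L. Inf (g ` {a..L})) \<longlongrightarrow> 0) (at_left b)"
proof (rule tendsto_sandwich[OF _ _ tendsto_const assms(3)])
  have L: "\<forall>\<^sub>F L in at_left b. L \<in> {a<..<b}"
    using eventually_at_left_real[OF assms(1)] .
  then show "\<forall>\<^sub>F L in at_left b. 0 \<le> Inf (g ` {a..L})"
    by eventually_elim (auto intro!: cInf_greatest assms(2))
  from L show "\<forall>\<^sub>F L in at_left b. Inf (g ` {a..L}) \<le> g L"
    by eventually_elim (auto intro!: cInf_lower bdd_belowI[of _ 0] assms(2))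
qed

lemma continuous_on_Ico_tendsto_imp_bounded:
  fixes f :: "real \<Rightarrow> real"
  assumes "continuous_on {a..<b} f" "(f \<longlongrightarrow> c) (at_left b)"
  obtains B where "\<And>x. x \<in> {a..<b} \<Longrightarrow> \<bar>f x\<bar> \<le> B"
proof -
  have "\<forall>\<^sub>F x in at_left b. dist (f x) c < 1"
    using assms(2) by (rule tendstoD) simp
  then obtain b' where "b' < b" and near: "\<And>y. b' < y \<Longrightarrow> y < b \<Longrightarrow> \<bar>f y - c\<bar> < 1"
    unfolding eventually_at_left_field dist_real_def by blast
  have "continuous_on {a..b'} f"
    using assms(1) by (rule continuous_on_subset) (use \<open>b' < b\<close> in auto)
  then obtain B0 where far: "\<And>x. x \<in> {a..b'} \<Longrightarrow> \<bar>f x\<bar> \<le> B0"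
    using continuous_on_compact_bound[OF compact_Icc] by (metis real_norm_def)
  have "\<bar>f x\<bar> \<le> max B0 (\<bar>c\<bar> + 1)" if x: "x \<in> {a..<b}" for x
  proof (cases "x \<le> b'")
    case True
    then show ?thesis using far[of x] x by simp
  next
    case False
    then have "\<bar>f x - c\<bar> < 1" using near[of x] x by simp
    then show ?thesis by linarith
  qed
  then show ?thesis using that by blast
qed

lemma Ico_mvt:
  fixes f f' :: "real \<Rightarrow> real"
  assumes deriv: "\<And>x. x \<in> {a..<b} \<Longrightarrow> (f has_real_derivative f' x) (at x within {a..<b})"
    and x: "x \<in> {a..<b}"
  obtains \<xi> where "\<xi> \<in> {a..x}" "f x - f a = f' \<xi> * (x - a)"
proof -
  have "(f has_derivative (*) (f' t)) (at t within {a..x})" if "a \<le> t" "t \<le> x" for t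
  proof -
    have "(f has_real_derivative f' t) (at t within {a..<b})"
      using deriv that x by simp
    then have "(f has_real_derivative f' t) (at t within {a..x})"
      by (rule has_field_derivative_subset) (use x in auto)
    then show ?thesis
      by (rule has_field_derivative_imp_has_derivative)
  qed
  then obtain \<xi> where "\<xi> \<in> {a..x}" "f x - f a = f' \<xi> * (x - a)"
    using mvt_very_simple[of a x f "\<lambda>t. (*) (f' t)"] x by auto
  then show ?thesis by (rule that)
qed

lemma Ico_range_of_deriv_bounds:
  fixes u du :: "real \<Rightarrow> real"
  assumes deriv: "\<And>x. x \<in> {a..<b} \<Longrightarrow> (u has_real_derivative du x) (at x within {a..<b})"
    and bounds: "\<And>x. x \<in> {a..<b} \<Longrightarrow> 0 \<le> du x \<and> du x \<le> B"
    and x: "x \<in> {a..<b}"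
  shows "u x \<in> {u a..u a + B * (b - a)}"
proof -
  obtain \<xi> where \<xi>: "\<xi> \<in> {a..x}" and incr: "u x - u a = du \<xi> * (x - a)"
    using Ico_mvt[OF deriv x] .
  have "0 \<le> du \<xi>" "du \<xi> \<le> B" using bounds[of \<xi>] \<xi> x by auto
  moreover have "0 \<le> x - a" "x - a \<le> b - a" using x by auto
  ultimately have "0 \<le> du \<xi> * (x - a)" "du \<xi> * (x - a) \<le> B * (b - a)"
    by (simp_all add: mult_mono)
  then show ?thesis using incr by auto
qed

lemma tendsto_0_mult_compose_compact:
  fixes w :: "'a \<Rightarrow> real" and h :: "'b::metric_space \<Rightarrow> real"
  assumes "(w \<longlongrightarrow> 0) F" "compact S" "continuous_on S h" "\<forall>\<^sub>F x in F. u x \<in> S"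
  shows "((\<lambda>x. w x * h (u x)) \<longlongrightarrow> 0) F"
proof -
  obtain C where C: "\<And>s. s \<in> S \<Longrightarrow> \<bar>h s\<bar> \<le> C"
    using continuous_on_compact_bound[OF assms(2,3)] by (metis real_norm_def)
  from assms(4) have "\<forall>\<^sub>F x in F. norm (w x * h (u x)) \<le> norm (w x) * C"
    by eventually_elim (simp add: abs_mult mult_left_mono C)
  then show ?thesis by (rule tendsto_0_le[OF assms(1)])
qed

lemma vanishing_factor_uniformly_pos_and_Inf_tendsto_0:
  fixes u du h f :: "real \<Rightarrow> real"
  assumes "a < l"
    and u_cont: "continuous_on {a..<l} u" and du_cont: "continuous_on {a..<l} du"
    and du_pos: "\<And>x. x \<in> {a..<l} \<Longrightarrow> 0 < du x" and du_lim: "(du \<longlongrightarrow> 0) (at_left l)"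
    and range: "\<And>x. x \<in> {a..<l} \<Longrightarrow> u x \<in> S" and "compact S"
    and h_cont: "continuous_on S h" and h_pos: "\<And>s. s \<in> S \<Longrightarrow> 0 < h s"
    and f_eq: "\<And>x. x \<in> {a..<l} \<Longrightarrow> f x = du x * h (u x)"
  shows "\<And>L. L < l \<Longrightarrow> \<exists>lam>0. \<forall>x\<in>{a..L}. lam \<le> f x"
    and "((\<lambda>L. Inf (f ` {a..L})) \<longlongrightarrow> 0) (at_left l)"
proof -
  have "continuous_on {a..<l} (\<lambda>x. h (u x))"
    by (rule continuous_on_compose2[OF h_cont u_cont]) (use range in blast)
  then have "continuous_on {a..<l} (\<lambda>x. du x * h (u x))"
    by (rule continuous_on_mult[OF du_cont])
  then have f_cont: "continuous_on {a..<l} f"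
    by (rule continuous_on_eq) (simp add: f_eq)
  have f_pos: "0 < f x" if "x \<in> {a..<l}" for x
    using du_pos[OF that] h_pos[OF range[OF that]] f_eq[OF that] by simp
  show "\<exists>lam>0. \<forall>x\<in>{a..L}. lam \<le> f x" if "L < l" for L
  proof -
    have "continuous_on {a..L} f"
      using f_cont by (rule continuous_on_subset) (use that in auto)
    moreover have "0 < f x" if "x \<in> {a..L}" for x
      using \<open>L < l\<close> that by (intro f_pos) auto
    ultimately show ?thesis
      by (rule compact_continuous_pos_imp_uniformly_pos[OF compact_Icc])
  qed
  have near: "\<forall>\<^sub>F x in at_left l. x \<in> {a..<l}"
    using eventually_at_left_real[OF \<open>a < l\<close>] by (rule eventually_mono) simp
  then have "\<forall>\<^sub>F x in at_left l. u x \<in> S"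
    by (rule eventually_mono) (rule range)
  then have "((\<lambda>x. du x * h (u x)) \<longlongrightarrow> 0) (at_left l)"
    by (rule tendsto_0_mult_compose_compact[OF du_lim \<open>compact S\<close> h_cont])
  moreover from near have "\<forall>\<^sub>F x in at_left l. du x * h (u x) = f x"
    by (rule eventually_mono) (simp add: f_eq)
  ultimately have "(f \<longlongrightarrow> 0) (at_left l)"
    by (rule Lim_transform_eventually)
  then show "((\<lambda>L. Inf (f ` {a..L})) \<longlongrightarrow> 0) (at_left l)"
    using Inf_image_Icc_tendsto_0[OF \<open>a < l\<close>] f_pos by (simp add: less_imp_le)
qed

lemma u_s_powr_gamma_plus_1:
  assumes "0 < \<gamma>" "0 < S0" "0 < J"
  shows "u_s \<gamma> S0 J powr (\<gamma> + 1) = \<gamma> * S0 * J powr (\<gamma> - 1)"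
proof -
  have "0 < \<gamma> * S0 * J powr (\<gamma> - 1)" "\<gamma> + 1 \<noteq> 0"
    using assms by simp_all
  then show ?thesis unfolding u_s_def by (simp add: powr_powr)
qed

lemma acc_solD:
  assumes "acc_sol \<gamma> S0 J \<zeta>0 u0 E0 u E du dE l"
  shows "0 < l" "u 0 = u0" "continuous_on {0..<l} du"
    and "\<And>x. x \<in> {0..<l} \<Longrightarrow> 0 < u x" "\<And>x. x \<in> {0..<l} \<Longrightarrow> 0 < du x"
    and "\<And>x. x \<in> {0..<l} \<Longrightarrow> (u has_real_derivative du x) (at x within {0..<l})"
    and "\<And>x. x \<in> {0..<l} \<Longrightarrow>
           (u x powr (\<gamma> + 1) - u_s \<gamma> S0 J powr (\<gamma> + 1)) * du x = E x * u x powr \<gamma>"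
  using assms unfolding acc_sol_def by auto

lemma acc_sol_range:
  assumes sol: "acc_sol \<gamma> S0 J \<zeta>0 u0 E0 u E du dE l" and du_lim: "(du \<longlongrightarrow> 0) (at_left l)"
  obtains hi where "\<And>x. x \<in> {0..<l} \<Longrightarrow> u x \<in> {u0..hi}"
proof -
  obtain B where B: "\<And>x. x \<in> {0..<l} \<Longrightarrow> \<bar>du x\<bar> \<le> B"
    using continuous_on_Ico_tendsto_imp_bounded[OF acc_solD(3)[OF sol] du_lim] by blast
  have bounds: "\<And>x. x \<in> {0..<l} \<Longrightarrow> 0 \<le> du x \<and> du x \<le> B"
    using acc_solD(5)[OF sol] B by (force simp: less_imp_le)
  then have "u x \<in> {u0..u0 + B * l}" if "x \<in> {0..<l}" for x
    using Ico_range_of_deriv_bounds[OF acc_solD(6)[OF sol] bounds that] acc_solD(2)[OF sol] by simp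
  then show ?thesis using that by blast
qed

lemma at_within_Ico_neq_bot:
  fixes x :: real
  assumes "x \<in> {a..<b}"
  shows "at x within {a..<b} \<noteq> bot"
  using assms by (simp add: trivial_limit_within)

lemma acc_sol_da11_eq:
  assumes sol: "acc_sol \<gamma> S0 J \<zeta>0 u0 E0 u E du dE l" and "0 < \<gamma>" "0 < S0" "0 < J"
    and da11: "((\<lambda>t. 1 - u t powr (\<gamma> + 1) / u_s \<gamma> S0 J powr (\<gamma> + 1)) has_real_derivative d)
                 (at x within {0..<l})"
    and x: "x \<in> {0..<l}"
  defines "K \<equiv> \<gamma> * S0 * J powr (\<gamma> - 1)"
  shows "- d = du x * ((\<gamma> + 1) * u x powr \<gamma> / K)"
proof -
  have "(u has_real_derivative du x) (at x within {0..<l})" "0 < u x"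
    using acc_solD(6,4)[OF sol x] .
  moreover have "0 < u_s \<gamma> S0 J"
    using assms(2-4) unfolding u_s_def by simp
  ultimately have "((\<lambda>t. 1 - u t powr (\<gamma> + 1) / u_s \<gamma> S0 J powr (\<gamma> + 1)) has_real_derivative
                     - ((\<gamma> + 1) * u x powr \<gamma> * du x / K)) (at x within {0..<l})"
    using u_s_powr_gamma_plus_1[OF \<open>0 < \<gamma>\<close> \<open>0 < S0\<close> \<open>0 < J\<close>] unfolding K_def
    by (auto intro!: derivative_eq_intros)
  then have "d = - ((\<gamma> + 1) * u x powr \<gamma> * du x / K)"
    using has_field_derivative_unique[OF da11 _ at_within_Ico_neq_bot[OF x]] by blast
  then show ?thesis by simp
qed

lemma acc_sol_abar_eq:
  assumes sol: "acc_sol \<gamma> S0 J \<zeta>0 u0 E0 u E du dE l" and "0 < \<gamma>" "0 < S0" "0 < J"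
    and x: "x \<in> {0..<l}"
  defines "K \<equiv> \<gamma> * S0 * J powr (\<gamma> - 1)"
  shows "- (u x powr (\<gamma> - 1) * (E x - (\<gamma> + 1) * du x * u x) / K)
           = du x * (\<gamma> * u x powr \<gamma> / K + 1 / u x)"
proof -
  have "0 < u x" and ode: "(u x powr (\<gamma> + 1) - K) * du x = E x * u x powr \<gamma>"
    using acc_solD(4,7)[OF sol x] u_s_powr_gamma_plus_1[OF \<open>0 < \<gamma>\<close> \<open>0 < S0\<close> \<open>0 < J\<close>]
    unfolding K_def by auto
  have "0 < K" using assms(2-4) unfolding K_def by simp
  have "u x powr (\<gamma> + 1) = u x powr \<gamma> * u x" "u x powr (\<gamma> - 1) = u x powr \<gamma> / u x"
    using \<open>0 < u x\<close> by (simp_all add: powr_add powr_diff)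
  with ode \<open>0 < u x\<close> \<open>0 < K\<close> show ?thesis
    by (simp add: field_simps)
qed

lemma acc_sol_du_factor_uniformly_pos_and_Inf_tendsto_0:
  fixes h f :: "real \<Rightarrow> real"
  assumes sol: "acc_sol \<gamma> S0 J \<zeta>0 u0 E0 u E du dE l" and du_lim: "(du \<longlongrightarrow> 0) (at_left l)"
    and h_cont: "continuous_on {0<..} h" and h_pos: "\<And>v. 0 < v \<Longrightarrow> 0 < h v"
    and f_eq: "\<And>x. x \<in> {0..<l} \<Longrightarrow> f x = du x * h (u x)"
  shows "\<And>L. L < l \<Longrightarrow> \<exists>lam>0. \<forall>x\<in>{0..L}. lam \<le> f x"
    and "((\<lambda>L. Inf (f ` {0..L})) \<longlongrightarrow> 0) (at_left l)"
proof -
  obtain hi where range: "\<And>x. x \<in> {0..<l} \<Longrightarrow> u x \<in> {u0..hi}"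
    using acc_sol_range[OF sol du_lim] by blast
  have "0 < u0"
    using acc_solD(1,2,4)[OF sol] by force
  then have "continuous_on {u0..hi} h" "\<And>v. v \<in> {u0..hi} \<Longrightarrow> 0 < h v"
    using h_pos by (auto intro: continuous_on_subset[OF h_cont])
  note factor = vanishing_factor_uniformly_pos_and_Inf_tendsto_0[OF acc_solD(1)[OF sol]
      DERIV_continuous_on[OF acc_solD(6)[OF sol]] acc_solD(3)[OF sol] acc_solD(5)[OF sol] du_lim
      range compact_Icc this f_eq]
  show "\<exists>lam>0. \<forall>x\<in>{0..L}. lam \<le> f x" if "L < l" for L
    using factor(1) that by blast
  show "((\<lambda>L. Inf (f ` {0..L})) \<longlongrightarrow> 0) (at_left l)"
    using factor(2) by blast
qed

lemma acc_sol_coefficients_uniformly_pos: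
  fixes da11 abar :: "real \<Rightarrow> real"
  assumes sol: "acc_sol \<gamma> S0 J \<zeta>0 u0 E0 u E du dE l" and "1 < \<gamma>" "0 < S0" "0 < J"
    and du_lim: "(du \<longlongrightarrow> 0) (at_left l)"
    and da11: "\<forall>x\<in>{0..<l}.
        ((\<lambda>t. 1 - u t powr (\<gamma> + 1) / u_s \<gamma> S0 J powr (\<gamma> + 1)) has_real_derivative da11 x)
          (at x within {0..<l})"
    and abar_def: "abar = (\<lambda>x. u x powr (\<gamma> - 1) * (E x - (\<gamma> + 1) * du x * u x)
                              / (\<gamma> * S0 * J powr (\<gamma> - 1)))"
    and "L < l"
  shows "\<exists>lam>0. \<forall>x\<in>{0..L}. lam \<le> - da11 x \<and> lam \<le> - abar x \<and>
           (\<forall>m::nat. lam \<le> - 2 * abar x - (2 * real m - 1) * da11 x)"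
proof -
  define K where "K = \<gamma> * S0 * J powr (\<gamma> - 1)"
  have "0 < K" using assms(2-4) unfolding K_def by simp
  \<comment> \<open>This single lower bound lies below all three coefficients, for every m.\<close>
  have "\<exists>lam>0. \<forall>x\<in>{0..L}. lam \<le> du x * ((\<gamma> - 1) * u x powr \<gamma> / K)"
    using \<open>1 < \<gamma>\<close> \<open>0 < K\<close> \<open>L < l\<close>
    by (intro acc_sol_du_factor_uniformly_pos_and_Inf_tendsto_0(1)[OF sol du_lim,
          where h = "\<lambda>v. (\<gamma> - 1) * v powr \<gamma> / K"])
      (auto intro!: continuous_intros)
  then obtain lam
    where "0 < lam" and lam: "\<forall>x\<in>{0..L}. lam \<le> du x * ((\<gamma> - 1) * u x powr \<gamma> / K)"
    by blast
  have "lam \<le> - da11 x \<and> lam \<le> - abar x \<and>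
          (\<forall>m::nat. lam \<le> - 2 * abar x - (2 * real m - 1) * da11 x)" if "x \<in> {0..L}" for x
  proof -
    have x: "x \<in> {0..<l}" using that \<open>L < l\<close> by simp
    define t where "t = du x * (u x powr \<gamma> / K)"
    define s where "s = du x / u x"
    have "0 < t" "0 < s"
      using acc_solD(4,5)[OF sol x] \<open>0 < K\<close> unfolding t_def s_def by simp_all
    have da11_x: "da11 x = - ((\<gamma> + 1) * t)" and abar_x: "abar x = - (\<gamma> * t + s)"
      and "lam \<le> (\<gamma> - 1) * t"
      using acc_sol_da11_eq[OF sol _ assms(3,4) bspec[OF da11 x] x]
        acc_sol_abar_eq[OF sol _ assms(3,4) x] lam that \<open>1 < \<gamma>\<close>
      unfolding abar_def t_def s_def K_def by (auto simp: field_simps)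
    have "lam \<le> - 2 * abar x - (2 * real m - 1) * da11 x" for m :: nat
    proof -
      have "0 \<le> real m * ((\<gamma> + 1) * t)" using \<open>0 < t\<close> \<open>1 < \<gamma>\<close> by simp
      with \<open>lam \<le> (\<gamma> - 1) * t\<close> \<open>0 < s\<close> show ?thesis
        unfolding da11_x abar_x by (simp add: algebra_simps)
    qed
    moreover have "lam \<le> - da11 x" "lam \<le> - abar x"
      unfolding da11_x abar_x using \<open>lam \<le> (\<gamma> - 1) * t\<close> \<open>0 < t\<close> \<open>0 < s\<close>
      by (simp_all add: algebra_simps)
    ultimately show ?thesis by blast
  qed
  with \<open>0 < lam\<close> show ?thesis by blast
qed

lemma acc_sol_coefficients_Inf_tendsto_0:
  fixes da11 abar :: "real \<Rightarrow> real"
  assumes sol: "acc_sol \<gamma> S0 J \<zeta>0 u0 E0 u E du dE l" and "1 < \<gamma>" "0 < S0" "0 < J"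
    and du_lim: "(du \<longlongrightarrow> 0) (at_left l)"
    and da11: "\<forall>x\<in>{0..<l}.
        ((\<lambda>t. 1 - u t powr (\<gamma> + 1) / u_s \<gamma> S0 J powr (\<gamma> + 1)) has_real_derivative da11 x)
          (at x within {0..<l})"
    and abar_def: "abar = (\<lambda>x. u x powr (\<gamma> - 1) * (E x - (\<gamma> + 1) * du x * u x)
                              / (\<gamma> * S0 * J powr (\<gamma> - 1)))"
  shows "((\<lambda>L. Inf ((\<lambda>x. - da11 x) ` {0..L})) \<longlongrightarrow> 0) (at_left l)"
    and "((\<lambda>L. Inf ((\<lambda>x. - abar x) ` {0..L})) \<longlongrightarrow> 0) (at_left l)"
    and "((\<lambda>L. Inf ((\<lambda>x. - 2 * abar x - (2 * real m - 1) * da11 x) ` {0..L})) \<longlongrightarrow> 0)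
           (at_left l)"
proof -
  define K where "K = \<gamma> * S0 * J powr (\<gamma> - 1)"
  define w where "w v = v powr \<gamma> / K" for v :: real
  have "0 < K" using assms(2-4) unfolding K_def by simp
  then have w_pos: "0 < w v" if "0 < v" for v
    using that unfolding w_def by simp
  have cont: "continuous_on {0<..} w" "continuous_on {0<..} (\<lambda>v::real. 1 / v)"
    unfolding w_def using \<open>0 < K\<close> by (auto intro!: continuous_intros)
  have da11_eq: "da11 x = - (du x * ((\<gamma> + 1) * w (u x)))" if "x \<in> {0..<l}" for x
    using acc_sol_da11_eq[OF sol _ assms(3,4) bspec[OF da11 that] that] \<open>1 < \<gamma>\<close>
    unfolding w_def K_def by simp
  have abar_eq: "abar x = - (du x * (\<gamma> * w (u x) + 1 / u x))" if "x \<in> {0..<l}" for x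
    using acc_sol_abar_eq[OF sol _ assms(3,4) that] \<open>1 < \<gamma>\<close>
    unfolding abar_def w_def K_def by simp
  show "((\<lambda>L. Inf ((\<lambda>x. - da11 x) ` {0..L})) \<longlongrightarrow> 0) (at_left l)"
    using cont w_pos da11_eq \<open>1 < \<gamma>\<close>
    by (intro acc_sol_du_factor_uniformly_pos_and_Inf_tendsto_0(2)[OF sol du_lim,
          where h = "\<lambda>v. (\<gamma> + 1) * w v"])
      (auto intro!: continuous_intros)
  have "0 < \<gamma> * w v + 1 / v" if "0 < v" for v
    using w_pos[OF that] that \<open>1 < \<gamma>\<close> by (simp add: add_pos_pos)
  then show "((\<lambda>L. Inf ((\<lambda>x. - abar x) ` {0..L})) \<longlongrightarrow> 0) (at_left l)"
    using cont abar_eq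
    by (intro acc_sol_du_factor_uniformly_pos_and_Inf_tendsto_0(2)[OF sol du_lim,
          where h = "\<lambda>v. \<gamma> * w v + 1 / v"])
      (auto intro!: continuous_intros)
  show "((\<lambda>L. Inf ((\<lambda>x. - 2 * abar x - (2 * real m - 1) * da11 x) ` {0..L})) \<longlongrightarrow> 0)
           (at_left l)"
  proof (rule acc_sol_du_factor_uniformly_pos_and_Inf_tendsto_0(2)[OF sol du_lim,
        where h = "\<lambda>v. (\<gamma> - 1 + 2 * real m * (\<gamma> + 1)) * w v + 2 / v"])
    show "continuous_on {0<..} (\<lambda>v. (\<gamma> - 1 + 2 * real m * (\<gamma> + 1)) * w v + 2 / v)"
      using cont by (auto intro!: continuous_intros)
    show "0 < (\<gamma> - 1 + 2 * real m * (\<gamma> + 1)) * w v + 2 / v" if "0 < v" for v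
      using w_pos[OF that] that \<open>1 < \<gamma>\<close> by (simp add: add_pos_nonneg)
    show "- 2 * abar x - (2 * real m - 1) * da11 x
            = du x * ((\<gamma> - 1 + 2 * real m * (\<gamma> + 1)) * w (u x) + 2 / u x)" if "x \<in> {0..<l}" for x
      unfolding da11_eq[OF that] abar_eq[OF that] by (simp add: algebra_simps)
  qed
qed

lemma fst_image_closure_Omega:
  assumes "0 < L"
  shows "fst ` closure (Omega L) = {0..L}"
  unfolding Omega_def closure_Times using assms by simp

lemma tendsto_Inf_closure_Omega_iff:
  fixes f :: "real \<Rightarrow> real"
  assumes "0 < l"
  shows "((\<lambda>L. Inf ((\<lambda>p. f (fst p)) ` closure (Omega L))) \<longlongrightarrow> c) (at_left l)
           \<longleftrightarrow> ((\<lambda>L. Inf (f ` {0..L})) \<longlongrightarrow> c) (at_left l)"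
proof (rule tendsto_cong)
  have "(\<lambda>p. f (fst p)) ` closure (Omega L) = f ` {0..L}" if "0 < L" for L
    using fst_image_closure_Omega[OF that] by (metis image_image)
  with eventually_at_left_real[OF assms]
  show "\<forall>\<^sub>F L in at_left l. Inf ((\<lambda>p. f (fst p)) ` closure (Omega L)) = Inf (f ` {0..L})"
    by (auto elim: eventually_mono)
qed

theorem lemma4p1:
  fixes \<gamma> \<zeta>0 S0 J u0 E0 lmax :: real
    and u E du dE da11 :: "real \<Rightarrow> real"
  assumes "\<gamma> > 1" and "\<zeta>0 > 1" and "S0 > 0" and "J > 0" and "E0 < 0"
    and "0 < u0" and "u0 < u_s \<gamma> S0 J"
    and "(u0, E0) \<in> T_acc \<gamma> S0 J \<zeta>0"
    and sol: "acc_sol \<gamma> S0 J \<zeta>0 u0 E0 u E du dE lmax"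
    and maximal: "\<not> (\<exists>l v F dv dF. l > lmax \<and> acc_sol \<gamma> S0 J \<zeta>0 u0 E0 v F dv dF l
                        \<and> (\<forall>x\<in>{0..<lmax}. v x = u x \<and> F x = E x))"
    and du_lim: "(du \<longlongrightarrow> 0) (at_left lmax)"
    and da11: "\<forall>x\<in>{0..<lmax}.
        ((\<lambda>t. 1 - u t powr (\<gamma> + 1) / u_s \<gamma> S0 J powr (\<gamma> + 1)) has_real_derivative da11 x)
          (at x within {0..<lmax})"
  defines "abar \<equiv> (\<lambda>x. u x powr (\<gamma> - 1) * (E x - (\<gamma> + 1) * du x * u x)
                         / (\<gamma> * S0 * J powr (\<gamma> - 1)))"
  shows "(\<forall>L\<in>{0<..<lmax}. \<exists>lam>0. \<forall>p\<in>closure (Omega L).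
             - da11 (fst p) \<ge> lam \<and> - abar (fst p) \<ge> lam \<and>
             (\<forall>m\<in>{0..3::nat}. - 2 * abar (fst p) - (2 * real m - 1) * da11 (fst p) \<ge> lam))
       \<and> ((\<lambda>L. Inf ((\<lambda>p. - da11 (fst p)) ` closure (Omega L))) \<longlongrightarrow> 0) (at_left lmax)
       \<and> ((\<lambda>L. Inf ((\<lambda>p. - abar (fst p)) ` closure (Omega L))) \<longlongrightarrow> 0) (at_left lmax)
       \<and> (\<forall>m\<in>{0..3::nat}.
            ((\<lambda>L. Inf ((\<lambda>p. - 2 * abar (fst p) - (2 * real m - 1) * da11 (fst p))
                        ` closure (Omega L))) \<longlongrightarrow> 0) (at_left lmax))"
proof -
  note coeffs_pos = acc_sol_coefficients_uniformly_pos[OF sol \<open>\<gamma> > 1\<close> \<open>S0 > 0\<close> \<open>J > 0\<close>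
      du_lim da11 abar_def[THEN meta_eq_to_obj_eq]]
  note coeffs_lim = acc_sol_coefficients_Inf_tendsto_0[OF sol \<open>\<gamma> > 1\<close> \<open>S0 > 0\<close> \<open>J > 0\<close>
      du_lim da11 abar_def[THEN meta_eq_to_obj_eq]]
  note Inf_iff = tendsto_Inf_closure_Omega_iff[OF acc_solD(1)[OF sol]]
  show ?thesis
  proof (intro conjI ballI)
    fix L assume L: "L \<in> {0<..<lmax}"
    then have "fst p \<in> {0..L}" if "p \<in> closure (Omega L)" for p
      using that fst_image_closure_Omega[of L] by force
    with coeffs_pos[of L] L
    show "\<exists>lam>0. \<forall>p\<in>closure (Omega L). - da11 (fst p) \<ge> lam \<and> - abar (fst p) \<ge> lam \<and>
             (\<forall>m\<in>{0..3::nat}. - 2 * abar (fst p) - (2 * real m - 1) * da11 (fst p) \<ge> lam)"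
      by fastforce
  qed (rule Inf_iff[THEN iffD2], rule coeffs_lim)+
qed

end
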